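(* The Greedy Maximizer policy is a $2$-approximation policy; that is, for every system with minimum average reward requirements $[q^*_X : X\in S]$ such that the same system with requirements $[2q^*_X]$ is strictly feasible, the Greedy Maximizer fulfills the system with requirements $[q^*_X]$.
   Context: A system consists of a finite set $S$ of tasks. Time is slotted, $t\in\{0,1,2,\dots\}$. Each task $X\in S$ has a period $\tau_X$ (a positive integer); time is partitioned into consecutive periods of $X$ of $\tau_X$ slots each, the first starting at $t=0$, and in each period $X$ has one job, removed at the end of the period. Let $T=\mathrm{lcm}\{\tau_X : X\in S\}$; time is partitioned into consecutive frames of $T$ slots each, the $k$-th frame ($k=1,2,\dots$) being the $k$-th such block starting from $t=0$. A scheduling policy chooses in each slot either to idle or to execute the job of exactly one task. Each task $X$ has rewards $r^1_X\ge r^2_X\ge\dots\ge r^{\tau_X}_X\ge 0$: executing the job of $X$ for the $i$-th time within a period yields reward $r^i_X$ to $X$. Let $s_X(t)$ be the total reward obtained by $X$ between time 0 and $t$; the average reward is $q_X=\liminf_{t\to\infty}s_X(t)/(t/T)$. Each task has a minimum requirement $q^*_X>0$; a policy fulfills the system if $q_X\ge q^*_X$ with probability 1 for all $X\in S$. The system is feasible if some policy fulfills it, and strictly feasible if there is $\epsilon>0$ such that the same system with requirements $[(1+\epsilon)q^*_X]$ is feasible. For $p\ge1$, a $p$-approximation policy is one that fulfills every system with requirements $[q^*_X]$ such that the same system with requirements $[p\,q^*_X]$ is strictly feasible. Let $\tilde q_X(k)$ be the total reward obtained by $X$ during the $k$-th frame. The debt of $X$ is $d_X(0)=0$, $d_X(k)=[d_X(k-1)+q^*_X-\tilde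 q_X(k)]^+$ for $k>0$, with $[x]^+=\max\{x,0\}$. The Greedy Maximizer policy is the following: at the start of each frame the debts are updated by the recursion above (initially all debts are $0$); during the frame, in each time slot, letting $i_X$ denote the number of times the job of $X$ has already been executed in its current period (reset to $0$ at the start of each period of $X$), the policy executes the job of a task $Y\in S$ maximizing $r^{i_Y+1}_Y\,d_Y$ over $X\in S$ (using the current debts $d_X$), with ties broken arbitrarily. *)

theory Defs
  imports Complex_Main "HOL-Library.Liminf_Limsup" "HOL-Library.Extended_Real"
begin

text \<open>Tasks have type 'a; the task set is S.  A schedule assigns to every time slot t
  either None (idle) or Some X (execute the job of task X).\<close>

definition frame_len :: "'a set \<Rightarrow> ('a \<Rightarrow> nat) \<Rightarrow> nat" where
  "frame_len S tau = Lcm (tau ` S)"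

definition valid_schedule :: "'a set \<Rightarrow> (nat \<Rightarrow> 'a option) \<Rightarrow> bool" where
  "valid_schedule S \<sigma> \<longleftrightarrow> (\<forall>t. \<sigma> t = None \<or> (\<exists>X\<in>S. \<sigma> t = Some X))"

text \<open>Number of times the job of X was executed in its current period before slot t
  (this is i_X at slot t).\<close>
definition execs :: "('a \<Rightarrow> nat) \<Rightarrow> (nat \<Rightarrow> 'a option) \<Rightarrow> 'a \<Rightarrow> nat \<Rightarrow> nat" where
  "execs tau \<sigma> X t = card {s. (t div tau X) * tau X \<le> s \<and> s < t \<and> \<sigma> s = Some X}"

text \<open>Reward obtained by X in slot s; r X i is r^i_X.\<close>
definition slot_reward ::
  "('a \<Rightarrow> nat) \<Rightarrow> ('a \<Rightarrow> nat \<Rightarrow> real) \<Rightarrow> (nat \<Rightarrow> 'a option) \<Rightarrow> 'a \<Rightarrow> nat \<Rightarrow> real" where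
  "slot_reward tau r \<sigma> X s = (if \<sigma> s = Some X then r X (execs tau \<sigma> X s + 1) else 0)"

definition total_reward ::
  "('a \<Rightarrow> nat) \<Rightarrow> ('a \<Rightarrow> nat \<Rightarrow> real) \<Rightarrow> (nat \<Rightarrow> 'a option) \<Rightarrow> 'a \<Rightarrow> nat \<Rightarrow> real" where
  "total_reward tau r \<sigma> X t = (\<Sum>s<t. slot_reward tau r \<sigma> X s)"

definition avg_reward ::
  "'a set \<Rightarrow> ('a \<Rightarrow> nat) \<Rightarrow> ('a \<Rightarrow> nat \<Rightarrow> real) \<Rightarrow> (nat \<Rightarrow> 'a option) \<Rightarrow> 'a \<Rightarrow> ereal" where
  "avg_reward S tau r \<sigma> X =
     liminf (\<lambda>t. ereal (total_reward tau r \<sigma> X t / (real t / real (frame_len S tau))))"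

definition fulfills ::
  "'a set \<Rightarrow> ('a \<Rightarrow> nat) \<Rightarrow> ('a \<Rightarrow> nat \<Rightarrow> real) \<Rightarrow> ('a \<Rightarrow> real) \<Rightarrow> (nat \<Rightarrow> 'a option) \<Rightarrow> bool" where
  "fulfills S tau r q \<sigma> \<longleftrightarrow> (\<forall>X\<in>S. ereal (q X) \<le> avg_reward S tau r \<sigma> X)"

definition feasible ::
  "'a set \<Rightarrow> ('a \<Rightarrow> nat) \<Rightarrow> ('a \<Rightarrow> nat \<Rightarrow> real) \<Rightarrow> ('a \<Rightarrow> real) \<Rightarrow> bool" where
  "feasible S tau r q \<longleftrightarrow> (\<exists>\<sigma>. valid_schedule S \<sigma> \<and> fulfills S tau r q \<sigma>)"

definition strictly_feasible ::
  "'a set \<Rightarrow> ('a \<Rightarrow> nat) \<Rightarrow> ('a \<Rightarrow> nat \<Rightarrow> real) \<Rightarrow> ('a \<Rightarrow> real) \<Rightarrow> bool" where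
  "strictly_feasible S tau r q \<longleftrightarrow> (\<exists>\<epsilon>>0. feasible S tau r (\<lambda>X. (1 + \<epsilon>) * q X))"

text \<open>Reward of X during the k-th frame (k \<ge> 1), i.e. slots (k-1)T,...,kT-1.\<close>
definition frame_reward ::
  "'a set \<Rightarrow> ('a \<Rightarrow> nat) \<Rightarrow> ('a \<Rightarrow> nat \<Rightarrow> real) \<Rightarrow> (nat \<Rightarrow> 'a option) \<Rightarrow> 'a \<Rightarrow> nat \<Rightarrow> real" where
  "frame_reward S tau r \<sigma> X k =
     (\<Sum>s\<in>{(k - 1) * frame_len S tau..<k * frame_len S tau}. slot_reward tau r \<sigma> X s)"

primrec debt ::
  "'a set \<Rightarrow> ('a \<Rightarrow> nat) \<Rightarrow> ('a \<Rightarrow> nat \<Rightarrow> real) \<Rightarrow> ('a \<Rightarrow> real) \<Rightarrow> (nat \<Rightarrow> 'a option)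
     \<Rightarrow> 'a \<Rightarrow> nat \<Rightarrow> real" where
  "debt S tau r q \<sigma> X 0 = 0"
| "debt S tau r q \<sigma> X (Suc k) =
     max 0 (debt S tau r q \<sigma> X k + q X - frame_reward S tau r \<sigma> X (Suc k))"

text \<open>sigma is a run of the Greedy Maximizer (with some tie-breaking): in slot t, which lies in
  frame (t div T) + 1, the current debts are d_X(t div T), and a task Y maximizing
  r^{i_Y+1}_Y d_Y is executed.\<close>
definition greedy_maximizer_schedule ::
  "'a set \<Rightarrow> ('a \<Rightarrow> nat) \<Rightarrow> ('a \<Rightarrow> nat \<Rightarrow> real) \<Rightarrow> ('a \<Rightarrow> real) \<Rightarrow> (nat \<Rightarrow> 'a option) \<Rightarrow> bool" where
  "greedy_maximizer_schedule S tau r q \<sigma> \<longleftrightarrow>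
     (\<forall>t. \<exists>Y\<in>S. \<sigma> t = Some Y \<and>
        (\<forall>X\<in>S. r X (execs tau \<sigma> X t + 1) * debt S tau r q \<sigma> X (t div frame_len S tau)
               \<le> r Y (execs tau \<sigma> Y t + 1) * debt S tau r q \<sigma> Y (t div frame_len S tau)))"

end

theory Submission
  imports Defs
begin

(*
  Fix a valid schedule \<rho> meeting the requirements 2(1+\<epsilon>)q.  Within one frame and for fixed
  nonnegative weights w, the greedy schedule earns at least half the w-weighted reward of \<rho>:
  each execution of \<rho> in slot t is either dominated by the greedy choice in slot t, or it is the
  i-th execution of a job that the greedy schedule has already executed more than i times in the
  same period, and it is then matched injectively with the greedy schedule's own i-th execution
  of that job.  Taking the debts as weights and comparing with a frame of \<rho> whose weighted reward
  is close to its long-run average gives (1+\<epsilon>) \<Sum> d_X q_X \<le> \<Sum> d_X q~_X(k+1) in every frame.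
  Hence the Lyapunov function \<Sum> d_X\<^sup>2 has negative drift once it is large, the debts stay
  bounded, and bounded debts force the average reward of X to be at least q_X.
*)

lemma decreasing_on_le:
  fixes f :: "nat \<Rightarrow> real"
  assumes "\<forall>i. 1 \<le> i \<and> i < n \<longrightarrow> f (i + 1) \<le> f i" and "1 \<le> i" "i \<le> j" "j \<le> n"
  shows "f j \<le> f i"
  using \<open>i \<le> j\<close> \<open>j \<le> n\<close>
proof (induction j rule: dec_induct)
  case (step k)
  have "f (k + 1) \<le> f k"
    using assms(1,2) step.hyps \<open>j \<le> n\<close> by simp
  then show ?case using step by simp
qed simp

lemma card_less_elem_attains:
  fixes A :: "nat set"
  assumes "finite A" "e < card A"
  shows "\<exists>s\<in>A. card {x\<in>A. x < s} = e"
  using assms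
proof (induction "card A" arbitrary: A)
  case (Suc n)
  define m where "m = Max A"
  have "A \<noteq> {}"
    using Suc.prems by auto
  then have m: "m \<in> A" "\<And>x. x \<in> A \<Longrightarrow> x \<le> m"
    using Suc.prems(1) by (simp_all add: m_def)
  have card_rest: "card (A - {m}) = n"
    using Suc.hyps(2) m(1) by simp
  show ?case
  proof (cases "e = n")
    case True
    have "{x\<in>A. x < m} = A - {m}"
      using m by fastforce
    then have "card {x\<in>A. x < m} = e"
      using card_rest True by simp
    then show ?thesis
      using m(1) by blast
  next
    case False
    then have "e < card (A - {m})"
      using Suc.hyps(2) Suc.prems(2) card_rest by linarith
    then obtain s where s: "s \<in> A - {m}" "card {x\<in>A - {m}. x < s} = e"
      using Suc.hyps(1) Suc.prems(1) card_rest by blast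
    moreover have "{x\<in>A - {m}. x < s} = {x\<in>A. x < s}"
      using s(1) m(2) by fastforce
    ultimately show ?thesis by auto
  qed
qed simp

lemma execs_le_mod: "execs tau \<sigma> X t \<le> t mod tau X"
proof -
  have "execs tau \<sigma> X t \<le> card {t div tau X * tau X..<t}"
    unfolding execs_def by (intro card_mono) auto
  then show ?thesis by (simp add: minus_div_mult_eq_mod)
qed

lemma execs_less_period: "0 < tau X \<Longrightarrow> execs tau \<sigma> X t < tau X"
  using execs_le_mod[of tau \<sigma> X t] mod_less_divisor[of "tau X" t] by linarith

lemma same_period_div:
  fixes k :: nat
  assumes "t div k * k \<le> s" "s \<le> t"
  shows "s div k = t div k"
proof (cases "k = 0")
  case False
  have "t div k \<le> s div k"
    using div_le_mono[OF assms(1), of k] False by simp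
  moreover have "s div k \<le> t div k"
    using assms(2) by (rule div_le_mono)
  ultimately show ?thesis by simp
qed simp

lemma dvd_le_period_start:
  fixes k :: nat
  assumes "k dvd a" "a \<le> t"
  shows "a \<le> t div k * k"
proof -
  have "a div k * k \<le> t div k * k"
    using assms(2) by (intro mult_le_mono1 div_le_mono)
  then show ?thesis
    using assms(1) by simp
qed

lemma execs_attains:
  assumes "j < execs tau \<sigma> X t"
  obtains s where "t div tau X * tau X \<le> s" "s < t" "\<sigma> s = Some X" "execs tau \<sigma> X s = j"
proof -
  define A where "A = {s. t div tau X * tau X \<le> s \<and> s < t \<and> \<sigma> s = Some X}"
  have "finite A"
    unfolding A_def by (rule finite_subset[of _ "{..<t}"]) auto
  moreover have "j < card A"
    using assms unfolding A_def execs_def .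
  ultimately obtain s where s: "s \<in> A" "card {x\<in>A. x < s} = j"
    using card_less_elem_attains by blast
  then have "s div tau X = t div tau X"
    unfolding A_def by (intro same_period_div) auto
  then have "{x\<in>A. x < s} = {x. s div tau X * tau X \<le> x \<and> x < s \<and> \<sigma> x = Some X}"
    using s(1) unfolding A_def by auto
  then have "execs tau \<sigma> X s = j"
    using s(2) unfolding execs_def by simp
  then show thesis
    using s(1) that unfolding A_def by blast
qed

lemma execs_strict_mono_in_period:
  assumes "\<sigma> t = Some X" "t < t'" "t div tau X = t' div tau X"
  shows "execs tau \<sigma> X t < execs tau \<sigma> X t'"
proof -
  let ?before = "\<lambda>u. {s. t' div tau X * tau X \<le> s \<and> s < u \<and> \<sigma> s = Some X}"
  have "t \<in> ?before t'"
    using assms by (simp flip: assms(3))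
  then have "?before t \<subset> ?before t'"
    using assms(2) by auto
  moreover have "finite (?before t')"
    by (rule finite_subset[of _ "{..<t'}"]) auto
  ultimately have "card (?before t) < card (?before t')"
    by (rule psubset_card_mono[rotated])
  then show ?thesis
    unfolding execs_def assms(3) .
qed

lemma execs_inj_in_period:
  assumes "\<sigma> t = Some X" "\<sigma> t' = Some X" "t div tau X = t' div tau X"
    and "execs tau \<sigma> X t = execs tau \<sigma> X t'"
  shows "t = t'"
  using execs_strict_mono_in_period[of \<sigma> t X t' tau] execs_strict_mono_in_period[of \<sigma> t' X t tau] assms
  by (cases t t' rule: linorder_cases) auto

lemma execs_shift:
  assumes "tau X dvd a" "0 < tau X"
  shows "execs tau \<rho> X (t + a) = card {u. t div tau X * tau X \<le> u \<and> u < t \<and> \<rho> (u + a) = Some X}"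
proof -
  have start: "(t + a) div tau X * tau X = t div tau X * tau X + a"
    using assms by (auto simp: algebra_simps)
  let ?shifted = "{u. t div tau X * tau X \<le> u \<and> u < t \<and> \<rho> (u + a) = Some X}"
  have "{s. (t + a) div tau X * tau X \<le> s \<and> s < t + a \<and> \<rho> s = Some X} = (\<lambda>u. u + a) ` ?shifted"
  proof (rule set_eqI iffI)+
    fix s assume "s \<in> {s. (t + a) div tau X * tau X \<le> s \<and> s < t + a \<and> \<rho> s = Some X}"
    then show "s \<in> (\<lambda>u. u + a) ` ?shifted"
      unfolding start by (intro image_eqI[where x = "s - a"]) auto
  qed (auto simp: start)
  then show ?thesis
    unfolding execs_def by (simp add: card_image)
qed

lemma valid_schedule_SomeD: "valid_schedule S \<rho> \<Longrightarrow> \<rho> t = Some Y \<Longrightarrow> Y \<in> S"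
  unfolding valid_schedule_def by (metis option.distinct(1) option.inject)

lemma sum_squares_max_step:
  fixes d d' q a Bx :: "'a \<Rightarrow> real"
  assumes "\<forall>X\<in>S. d' X = max 0 (d X + q X - a X)" and "\<forall>X\<in>S. \<bar>q X - a X\<bar> \<le> Bx X"
  shows "(\<Sum>X\<in>S. (d' X)\<^sup>2)
    \<le> (\<Sum>X\<in>S. (d X)\<^sup>2) + 2 * ((\<Sum>X\<in>S. d X * q X) - (\<Sum>X\<in>S. d X * a X)) + (\<Sum>X\<in>S. (Bx X)\<^sup>2)"
proof -
  have "(d' X)\<^sup>2 \<le> (d X)\<^sup>2 + 2 * (d X * q X - d X * a X) + (Bx X)\<^sup>2" if X: "X \<in> S" for X
  proof -
    have "(d' X)\<^sup>2 \<le> (d X + (q X - a X))\<^sup>2"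
      using assms(1) X by (simp add: max_def)
    also have "\<dots> = (d X)\<^sup>2 + 2 * (d X * q X - d X * a X) + \<bar>q X - a X\<bar>\<^sup>2"
      by (simp add: power2_eq_square algebra_simps)
    also have "\<bar>q X - a X\<bar>\<^sup>2 \<le> (Bx X)\<^sup>2"
      using assms(2) X by (intro power_mono) auto
    finally show ?thesis by simp
  qed
  then have "(\<Sum>X\<in>S. (d' X)\<^sup>2) \<le> (\<Sum>X\<in>S. (d X)\<^sup>2 + 2 * (d X * q X - d X * a X) + (Bx X)\<^sup>2)"
    by (rule sum_mono)
  then show ?thesis
    by (simp add: sum.distrib sum_subtractf sum_distrib_left)
qed

lemma sum_squares_le_of_weighted_sum_le:
  fixes d w :: "'a \<Rightarrow> real"
  assumes "finite S" and d: "\<forall>X\<in>S. 0 \<le> d X" and w: "\<forall>X\<in>S. 0 < w X"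
    and le: "(\<Sum>X\<in>S. d X * w X) \<le> c"
  shows "(\<Sum>X\<in>S. (d X)\<^sup>2) \<le> (\<Sum>X\<in>S. (c / w X)\<^sup>2)"
proof -
  have "d X \<le> c / w X" if X: "X \<in> S" for X
  proof -
    have "d X * w X \<le> (\<Sum>Y\<in>S. d Y * w Y)"
      using X d w \<open>finite S\<close> by (intro member_le_sum) (auto simp: less_imp_le)
    then show ?thesis
      using le w X by (simp add: le_divide_eq)
  qed
  then show ?thesis
    using d by (intro sum_mono power_mono) auto
qed

lemma negative_drift_bounded:
  fixes d a :: "nat \<Rightarrow> 'a \<Rightarrow> real" and q Bx :: "'a \<Rightarrow> real"
  assumes "finite S" and qpos: "\<forall>X\<in>S. q X > 0"
    and d0: "\<forall>X\<in>S. d 0 X = 0" and dSuc: "\<forall>k. \<forall>X\<in>S. d (Suc k) X = max 0 (d k X + q X - a k X)"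
    and bounded_increment: "\<forall>k. \<forall>X\<in>S. \<bar>q X - a k X\<bar> \<le> Bx X"
    and "\<epsilon> > 0" and drift: "\<forall>k. (1 + \<epsilon>) * (\<Sum>X\<in>S. d k X * q X) \<le> (\<Sum>X\<in>S. d k X * a k X)"
  shows "\<exists>D. \<forall>k. \<forall>X\<in>S. d k X \<le> D"
proof -
  have nonneg: "0 \<le> d k X" if "X \<in> S" for k X
    using that d0 dSuc by (cases k) auto
  define L where "L k = (\<Sum>X\<in>S. (d k X)\<^sup>2)" for k
  define B where "B = (\<Sum>X\<in>S. (Bx X)\<^sup>2)"
  define C where "C = (\<Sum>X\<in>S. (B / (2 * \<epsilon>) / q X)\<^sup>2)"
  have step: "L (Suc k) \<le> L k - 2 * (\<epsilon> * (\<Sum>X\<in>S. d k X * q X)) + B" for k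
  proof -
    have "L (Suc k) \<le> L k + 2 * ((\<Sum>X\<in>S. d k X * q X) - (\<Sum>X\<in>S. d k X * a k X)) + B"
      using sum_squares_max_step[of S "d (Suc k)" "d k" q "a k" Bx] dSuc bounded_increment
      unfolding L_def B_def by blast
    moreover have "(\<Sum>X\<in>S. d k X * q X) + \<epsilon> * (\<Sum>X\<in>S. d k X * q X) \<le> (\<Sum>X\<in>S. d k X * a k X)"
      using drift[rule_format, of k] by (simp add: algebra_simps)
    ultimately show ?thesis
      by (smt (verit))
  qed
  have "L k \<le> C + B" for k
  proof (induction k)
    case 0
    then show ?case
      using d0 unfolding L_def B_def C_def by (simp add: sum_nonneg)
  next
    case (Suc k)
    show ?case
    proof (cases "B \<le> 2 * (\<epsilon> * (\<Sum>X\<in>S. d k X * q X))")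
      case True
      then show ?thesis
        using step[of k] Suc.IH by linarith
    next
      case False
      then have "(\<Sum>X\<in>S. d k X * q X) \<le> B / (2 * \<epsilon>)"
        using \<open>\<epsilon> > 0\<close> by (simp add: field_simps)
      then have "L k \<le> C"
        unfolding L_def C_def using \<open>finite S\<close> nonneg qpos by (intro sum_squares_le_of_weighted_sum_le) auto
      moreover have "0 \<le> \<epsilon> * (\<Sum>X\<in>S. d k X * q X)"
        using \<open>\<epsilon> > 0\<close> nonneg qpos by (intro mult_nonneg_nonneg sum_nonneg) (auto simp: less_imp_le)
      ultimately show ?thesis
        using step[of k] by linarith
    qed
  qed
  then have "d k X \<le> sqrt (C + B)" if "X \<in> S" for k X
    using that member_le_sum[of X S "\<lambda>X. (d k X)\<^sup>2"] \<open>finite S\<close> unfolding L_def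
    by (intro real_le_rsqrt) (auto intro: order_trans)
  then show ?thesis
    by blast
qed

lemma liminf_ratio_ge:
  fixes f :: "nat \<Rightarrow> real" and T :: nat
  assumes "T > 0" and lower: "\<And>t. Q * (real t / real T) - C \<le> f t"
  shows "ereal Q \<le> liminf (\<lambda>t. ereal (f t / (real t / real T)))"
proof -
  have "((\<lambda>t. Q - C * real T / real t) \<longlongrightarrow> Q - 0) sequentially"
    by (intro tendsto_diff tendsto_const lim_const_over_n)
  then have "liminf (\<lambda>t. ereal (Q - C * real T / real t)) = ereal Q"
    by (intro lim_imp_Liminf) auto
  moreover have "eventually (\<lambda>t. ereal (Q - C * real T / real t) \<le> ereal (f t / (real t / real T))) sequentially"
    unfolding eventually_sequentially
  proof (intro exI allI impI)
    fix t :: nat assume "1 \<le> t"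
    then have "Q - C * real T / real t = (Q * (real t / real T) - C) / (real t / real T)"
      using \<open>T > 0\<close> by (simp add: field_simps)
    also have "\<dots> \<le> f t / (real t / real T)"
      using lower[of t] by (intro divide_right_mono) auto
    finally show "ereal (Q - C * real T / real t) \<le> ereal (f t / (real t / real T))"
      by simp
  qed
  then have "liminf (\<lambda>t. ereal (Q - C * real T / real t)) \<le> liminf (\<lambda>t. ereal (f t / (real t / real T)))"
    by (rule Liminf_mono)
  ultimately show ?thesis
    by simp
qed

locale task_system =
  fixes S :: "'a set" and tau :: "'a \<Rightarrow> nat" and r :: "'a \<Rightarrow> nat \<Rightarrow> real"
  assumes finite_tasks: "finite S"
    and period_pos: "\<forall>X\<in>S. tau X > 0"
    and reward_decreasing: "\<forall>X\<in>S. \<forall>i. 1 \<le> i \<and> i < tau X \<longrightarrow> r X (i + 1) \<le> r X i"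
    and reward_nonneg: "\<forall>X\<in>S. \<forall>i. 1 \<le> i \<and> i \<le> tau X \<longrightarrow> 0 \<le> r X i"
begin

abbreviation "T \<equiv> frame_len S tau"

abbreviation frame :: "nat \<Rightarrow> nat set" where
  "frame m \<equiv> {m * T..<Suc m * T}"

lemma frame_len_pos: "T > 0"
proof -
  have "0 \<notin> tau ` S"
    using period_pos by auto
  then show ?thesis
    unfolding frame_len_def using finite_tasks Lcm_0_iff_nat by (metis finite_imageI gr0I)
qed

lemma period_dvd_frame_len: "X \<in> S \<Longrightarrow> tau X dvd T"
  unfolding frame_len_def by (rule dvd_Lcm) simp

lemma reward_antimono: "X \<in> S \<Longrightarrow> 1 \<le> i \<Longrightarrow> i \<le> j \<Longrightarrow> j \<le> tau X \<Longrightarrow> r X j \<le> r X i"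
  using decreasing_on_le[of "tau X" "r X" i j] reward_decreasing by blast

lemma next_reward_nonneg: "X \<in> S \<Longrightarrow> 0 \<le> r X (execs tau \<sigma> X t + 1)"
  using reward_nonneg execs_less_period[of tau X \<sigma> t] period_pos by (simp add: Suc_leI)

lemma next_reward_le_first: "X \<in> S \<Longrightarrow> r X (execs tau \<sigma> X t + 1) \<le> r X 1"
  using reward_antimono[of X 1 "execs tau \<sigma> X t + 1"] execs_less_period[of tau X \<sigma> t] period_pos
  by (simp add: Suc_leI)

lemma slot_reward_nonneg: "X \<in> S \<Longrightarrow> 0 \<le> slot_reward tau r \<sigma> X t"
  unfolding slot_reward_def using next_reward_nonneg by simp

lemma slot_reward_le_first: "X \<in> S \<Longrightarrow> slot_reward tau r \<sigma> X t \<le> r X 1"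
  unfolding slot_reward_def
  using next_reward_le_first order_trans[OF next_reward_nonneg next_reward_le_first] by simp

lemma frame_reward_nonneg: "X \<in> S \<Longrightarrow> 0 \<le> frame_reward S tau r \<sigma> X k"
  unfolding frame_reward_def by (intro sum_nonneg) (simp add: slot_reward_nonneg)

lemma frame_reward_le: "X \<in> S \<Longrightarrow> frame_reward S tau r \<sigma> X (Suc k) \<le> real T * r X 1"
proof -
  assume X: "X \<in> S"
  have "frame_reward S tau r \<sigma> X (Suc k) \<le> (\<Sum>s\<in>frame k. r X 1)"
    unfolding frame_reward_def diff_Suc_1 using X slot_reward_le_first by (intro sum_mono)
  then show ?thesis by simp
qed

definition weighted_reward :: "('a \<Rightarrow> real) \<Rightarrow> (nat \<Rightarrow> 'a option) \<Rightarrow> nat \<Rightarrow> real" where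
  "weighted_reward w \<rho> t = (\<Sum>X\<in>S. w X * slot_reward tau r \<rho> X t)"

lemma weighted_reward_Some:
  assumes "\<rho> t = Some Y" "Y \<in> S"
  shows "weighted_reward w \<rho> t = w Y * r Y (execs tau \<rho> Y t + 1)"
proof -
  have "weighted_reward w \<rho> t = (\<Sum>X\<in>S. if X = Y then w Y * r Y (execs tau \<rho> Y t + 1) else 0)"
    unfolding weighted_reward_def by (intro sum.cong) (auto simp: slot_reward_def assms(1))
  then show ?thesis
    using assms(2) finite_tasks by simp
qed

lemma weighted_reward_None: "\<rho> t = None \<Longrightarrow> weighted_reward w \<rho> t = 0"
  unfolding weighted_reward_def slot_reward_def by simp

lemma weighted_reward_nonneg: "\<forall>X\<in>S. 0 \<le> w X \<Longrightarrow> 0 \<le> weighted_reward w \<rho> t"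
  unfolding weighted_reward_def by (intro sum_nonneg) (simp add: slot_reward_nonneg)

lemma sum_weighted_frame_reward:
  "(\<Sum>X\<in>S. w X * frame_reward S tau r \<rho> X (Suc m)) = (\<Sum>t\<in>frame m. weighted_reward w \<rho> t)"
  unfolding frame_reward_def weighted_reward_def
  by (simp add: sum_distrib_left) (rule sum.swap)

definition greedy_slot :: "('a \<Rightarrow> real) \<Rightarrow> (nat \<Rightarrow> 'a option) \<Rightarrow> nat \<Rightarrow> bool" where
  "greedy_slot w \<sigma> t \<longleftrightarrow> (\<exists>Y\<in>S. \<sigma> t = Some Y \<and>
     (\<forall>X\<in>S. r X (execs tau \<sigma> X t + 1) * w X \<le> r Y (execs tau \<sigma> Y t + 1) * w Y))"

lemma greedy_slot_dominates:
  assumes w: "\<forall>X\<in>S. 0 \<le> w X" and greedy: "greedy_slot w \<sigma> t"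
    and "\<rho> t = None \<or> (\<exists>Y\<in>S. \<rho> t = Some Y \<and> execs tau \<sigma> Y t \<le> execs tau \<rho> Y t)"
  shows "weighted_reward w \<rho> t \<le> weighted_reward w \<sigma> t"
  using assms(3)
proof
  assume "\<rho> t = None"
  then show ?thesis
    using weighted_reward_None weighted_reward_nonneg w by simp
next
  assume "\<exists>Y\<in>S. \<rho> t = Some Y \<and> execs tau \<sigma> Y t \<le> execs tau \<rho> Y t"
  then obtain Y where Y: "Y \<in> S" "\<rho> t = Some Y" "execs tau \<sigma> Y t \<le> execs tau \<rho> Y t"
    by blast
  obtain Z where Z: "Z \<in> S" "\<sigma> t = Some Z"
    "r Y (execs tau \<sigma> Y t + 1) * w Y \<le> r Z (execs tau \<sigma> Z t + 1) * w Z"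
    using greedy Y(1) unfolding greedy_slot_def by blast
  have "r Y (execs tau \<rho> Y t + 1) \<le> r Y (execs tau \<sigma> Y t + 1)"
    using reward_antimono[of Y "execs tau \<sigma> Y t + 1" "execs tau \<rho> Y t + 1"] Y
      execs_less_period[of tau Y \<rho> t] period_pos by (simp add: Suc_leI)
  then have "w Y * r Y (execs tau \<rho> Y t + 1) \<le> w Y * r Y (execs tau \<sigma> Y t + 1)"
    using w Y(1) by (simp add: mult_left_mono)
  also have "\<dots> \<le> w Z * r Z (execs tau \<sigma> Z t + 1)"
    using Z(3) by (simp add: mult.commute)
  finally show ?thesis
    using weighted_reward_Some Y Z by simp
qed

definition lagging_slots :: "(nat \<Rightarrow> 'a option) \<Rightarrow> (nat \<Rightarrow> 'a option) \<Rightarrow> nat \<Rightarrow> nat set" where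
  "lagging_slots \<rho> \<sigma> m = {t\<in>frame m. \<exists>Y. \<rho> t = Some Y \<and> execs tau \<rho> Y t < execs tau \<sigma> Y t}"

lemma lagging_slot_matched:
  assumes valid: "valid_schedule S \<rho>" and t: "t \<in> lagging_slots \<rho> \<sigma> m"
  obtains Y s where "\<rho> t = Some Y" "\<sigma> s = Some Y" "s \<in> frame m" "s div tau Y = t div tau Y"
    "execs tau \<sigma> Y s = execs tau \<rho> Y t"
proof -
  obtain Y where Y: "\<rho> t = Some Y" "execs tau \<rho> Y t < execs tau \<sigma> Y t"
    using t unfolding lagging_slots_def by blast
  from Y(2) obtain s where s: "t div tau Y * tau Y \<le> s" "s < t" "\<sigma> s = Some Y"
    "execs tau \<sigma> Y s = execs tau \<rho> Y t"
    by (rule execs_attains)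
  have "Y \<in> S"
    using valid Y(1) by (rule valid_schedule_SomeD)
  then have "m * T \<le> t div tau Y * tau Y"
    using t period_dvd_frame_len by (intro dvd_le_period_start) (auto simp: lagging_slots_def)
  then have "s \<in> frame m"
    using s t unfolding lagging_slots_def by auto
  moreover have "s div tau Y = t div tau Y"
    using s by (intro same_period_div) auto
  ultimately show thesis
    using that Y(1) s(3,4) by blast
qed

lemma sum_lagging_slots_le:
  assumes w: "\<forall>X\<in>S. 0 \<le> w X" and valid: "valid_schedule S \<rho>"
  shows "(\<Sum>t\<in>lagging_slots \<rho> \<sigma> m. weighted_reward w \<rho> t) \<le> (\<Sum>t\<in>frame m. weighted_reward w \<sigma> t)"
proof -
  define B where "B = lagging_slots \<rho> \<sigma> m"
  define match where "match t s \<longleftrightarrow> (\<exists>Y. \<rho> t = Some Y \<and> \<sigma> s = Some Y \<and> s \<in> frame m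
    \<and> s div tau Y = t div tau Y \<and> execs tau \<sigma> Y s = execs tau \<rho> Y t)" for t s
  have "\<exists>s. match t s" if "t \<in> B" for t
    using lagging_slot_matched[OF valid] that unfolding B_def match_def by metis
  then obtain \<phi> where \<phi>: "\<And>t. t \<in> B \<Longrightarrow> match t (\<phi> t)"
    by metis
  have "inj_on \<phi> B"
  proof (rule inj_onI)
    fix t t' assume "t \<in> B" "t' \<in> B" "\<phi> t = \<phi> t'"
    then obtain Y Y' where "\<rho> t = Some Y" "\<rho> t' = Some Y'" "\<sigma> (\<phi> t) = Some Y" "\<sigma> (\<phi> t) = Some Y'"
      "\<phi> t div tau Y = t div tau Y" "\<phi> t div tau Y' = t' div tau Y'"
      "execs tau \<sigma> Y (\<phi> t) = execs tau \<rho> Y t" "execs tau \<sigma> Y' (\<phi> t) = execs tau \<rho> Y' t'"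
      using \<phi> unfolding match_def by metis
    then show "t = t'"
      by (intro execs_inj_in_period[of \<rho> t Y t' tau]) auto
  qed
  moreover have "weighted_reward w \<sigma> (\<phi> t) = weighted_reward w \<rho> t" if "t \<in> B" for t
    using \<phi>[OF that] valid_schedule_SomeD[OF valid] unfolding match_def
    by (auto simp: weighted_reward_Some)
  ultimately have "(\<Sum>t\<in>B. weighted_reward w \<rho> t) = (\<Sum>s\<in>\<phi> ` B. weighted_reward w \<sigma> s)"
    by (simp add: sum.reindex)
  also have "\<dots> \<le> (\<Sum>t\<in>frame m. weighted_reward w \<sigma> t)"
  proof (rule sum_mono2)
    show "\<phi> ` B \<subseteq> frame m"
      using \<phi> unfolding match_def by blast
  qed (use weighted_reward_nonneg w in auto)
  finally show ?thesis
    unfolding B_def .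
qed

lemma sum_not_lagging_slots_le:
  assumes w: "\<forall>X\<in>S. 0 \<le> w X" and greedy: "\<forall>t\<in>frame m. greedy_slot w \<sigma> t"
    and valid: "valid_schedule S \<rho>"
  shows "(\<Sum>t\<in>frame m - lagging_slots \<rho> \<sigma> m. weighted_reward w \<rho> t) \<le> (\<Sum>t\<in>frame m. weighted_reward w \<sigma> t)"
proof -
  have "(\<Sum>t\<in>frame m - lagging_slots \<rho> \<sigma> m. weighted_reward w \<rho> t)
      \<le> (\<Sum>t\<in>frame m - lagging_slots \<rho> \<sigma> m. weighted_reward w \<sigma> t)"
  proof (rule sum_mono)
    fix t assume t: "t \<in> frame m - lagging_slots \<rho> \<sigma> m"
    have "\<rho> t = None \<or> (\<exists>Y\<in>S. \<rho> t = Some Y \<and> execs tau \<sigma> Y t \<le> execs tau \<rho> Y t)"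
    proof (cases "\<rho> t")
      case (Some Y)
      then show ?thesis
        using t valid_schedule_SomeD[OF valid] unfolding lagging_slots_def by (auto simp: not_less)
    qed simp
    then show "weighted_reward w \<rho> t \<le> weighted_reward w \<sigma> t"
      using greedy_slot_dominates w greedy t by blast
  qed
  also have "\<dots> \<le> (\<Sum>t\<in>frame m. weighted_reward w \<sigma> t)"
    using weighted_reward_nonneg w by (intro sum_mono2) auto
  finally show ?thesis .
qed

lemma greedy_frame_exchange:
  assumes w: "\<forall>X\<in>S. 0 \<le> w X" and greedy: "\<forall>t\<in>frame m. greedy_slot w \<sigma> t"
    and valid: "valid_schedule S \<rho>"
  shows "(\<Sum>t\<in>frame m. weighted_reward w \<rho> t) \<le> 2 * (\<Sum>t\<in>frame m. weighted_reward w \<sigma> t)"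
proof -
  have "lagging_slots \<rho> \<sigma> m \<subseteq> frame m"
    unfolding lagging_slots_def by auto
  then have "(\<Sum>t\<in>frame m. weighted_reward w \<rho> t)
      = (\<Sum>t\<in>frame m - lagging_slots \<rho> \<sigma> m. weighted_reward w \<rho> t)
        + (\<Sum>t\<in>lagging_slots \<rho> \<sigma> m. weighted_reward w \<rho> t)"
    by (intro sum.subset_diff) auto
  then show ?thesis
    using sum_lagging_slots_le[OF w valid, of \<sigma> m] sum_not_lagging_slots_le[OF w greedy valid] by linarith
qed

lemma total_reward_frames:
  "total_reward tau r \<rho> X (K * T) = (\<Sum>k<K. frame_reward S tau r \<rho> X (Suc k))"
proof (induction K)
  case (Suc K)
  have "total_reward tau r \<rho> X (Suc K * T)
      = total_reward tau r \<rho> X (K * T) + (\<Sum>s\<in>frame K. slot_reward tau r \<rho> X s)"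
    unfolding total_reward_def lessThan_atLeast0 by (rule sum.atLeastLessThan_concat[symmetric]) auto
  then show ?case
    using Suc by (simp add: frame_reward_def)
qed (simp add: total_reward_def)

lemma frame_reward_as_offsets:
  "frame_reward S tau r \<rho> X (Suc m) = (\<Sum>u<T. slot_reward tau r \<rho> X (u + m * T))"
  unfolding frame_reward_def lessThan_atLeast0
  using sum.shift_bounds_nat_ivl[of "slot_reward tau r \<rho> X" 0 "m * T" T] by (simp add: add.commute)

lemma frame_reward_shift:
  assumes shift: "\<forall>u. \<rho>' (u + m * T) = \<rho> (u + k * T)" and X: "X \<in> S"
  shows "frame_reward S tau r \<rho>' X (Suc m) = frame_reward S tau r \<rho> X (Suc k)"
proof -
  have dvd: "tau X dvd m * T" "tau X dvd k * T" and pos: "0 < tau X"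
    using period_dvd_frame_len[OF X] period_pos X by auto
  have "slot_reward tau r \<rho>' X (u + m * T) = slot_reward tau r \<rho> X (u + k * T)" for u
    unfolding slot_reward_def execs_shift[of tau X "m * T", OF dvd(1) pos]
      execs_shift[of tau X "k * T", OF dvd(2) pos]
    using shift by simp
  then show ?thesis
    unfolding frame_reward_as_offsets by simp
qed

lemma weighted_frame_reward_le_greedy:
  assumes w: "\<forall>X\<in>S. 0 \<le> w X" and greedy: "\<forall>t\<in>frame m. greedy_slot w \<sigma> t"
    and valid: "valid_schedule S \<rho>"
  shows "(\<Sum>X\<in>S. w X * frame_reward S tau r \<rho> X (Suc k))
    \<le> 2 * (\<Sum>X\<in>S. w X * frame_reward S tau r \<sigma> X (Suc m))"
proof -
  \<comment> \<open>only slots t \<ge> m * T of \<rho>' matter, where the truncated subtraction is exact\<close>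
  define \<rho>' where "\<rho>' t = \<rho> (t + k * T - m * T)" for t
  have "valid_schedule S \<rho>'"
    using valid unfolding valid_schedule_def \<rho>'_def by blast
  have "(\<Sum>X\<in>S. w X * frame_reward S tau r \<rho> X (Suc k))
      = (\<Sum>X\<in>S. w X * frame_reward S tau r \<rho>' X (Suc m))"
    using frame_reward_shift[of \<rho>' m \<rho> k] by (simp add: \<rho>'_def)
  also have "\<dots> = (\<Sum>t\<in>frame m. weighted_reward w \<rho>' t)"
    by (rule sum_weighted_frame_reward)
  also have "\<dots> \<le> 2 * (\<Sum>t\<in>frame m. weighted_reward w \<sigma> t)"
    using w greedy \<open>valid_schedule S \<rho>'\<close> by (rule greedy_frame_exchange)
  also have "\<dots> = 2 * (\<Sum>X\<in>S. w X * frame_reward S tau r \<sigma> X (Suc m))"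
    by (simp add: sum_weighted_frame_reward)
  finally show ?thesis .
qed

lemma fulfills_total_reward_ge:
  assumes fulfills: "fulfills S tau r q' \<rho>" and "\<delta> > 0"
  obtains K where "K > 0" "\<And>X. X \<in> S \<Longrightarrow> real K * (q' X - \<delta>) \<le> total_reward tau r \<rho> X (K * T)"
proof -
  let ?avg = "\<lambda>X t. total_reward tau r \<rho> X t / (real t / real T)"
  have "\<forall>X\<in>S. eventually (\<lambda>t. ereal (q' X - \<delta>) < ereal (?avg X t)) sequentially"
  proof
    fix X assume "X \<in> S"
    then have "ereal (q' X) \<le> liminf (\<lambda>t. ereal (?avg X t))"
      using fulfills unfolding fulfills_def avg_reward_def by blast
    moreover have "ereal (q' X - \<delta>) < ereal (q' X)"
      using \<open>\<delta> > 0\<close> by simp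
    ultimately show "eventually (\<lambda>t. ereal (q' X - \<delta>) < ereal (?avg X t)) sequentially"
      unfolding le_Liminf_iff by blast
  qed
  then have "eventually (\<lambda>t. \<forall>X\<in>S. q' X - \<delta> < ?avg X t) sequentially"
    using eventually_ball_finite[OF finite_tasks] by simp
  then obtain N where N: "\<And>t X. N \<le> t \<Longrightarrow> X \<in> S \<Longrightarrow> q' X - \<delta> < ?avg X t"
    unfolding eventually_sequentially by blast
  have "Suc N * 1 \<le> Suc N * T"
    using frame_len_pos by (intro mult_le_mono2) simp
  then have "N \<le> Suc N * T"
    by simp
  moreover have "real (Suc N * T) / real T = real (Suc N)"
    unfolding of_nat_mult using frame_len_pos by simp
  ultimately have "q' X - \<delta> < total_reward tau r \<rho> X (Suc N * T) / real (Suc N)" if "X \<in> S" for X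
    using N[of "Suc N * T" X] that by simp
  then have "real (Suc N) * (q' X - \<delta>) \<le> total_reward tau r \<rho> X (Suc N * T)" if "X \<in> S" for X
    using that pos_less_divide_eq[of "real (Suc N)"] by (simp add: mult.commute less_imp_le del: of_nat_Suc)
  then show thesis
    using that[of "Suc N"] by blast
qed

lemma exists_frame_near_requirement:
  assumes fulfills: "fulfills S tau r q' \<rho>" and w: "\<forall>X\<in>S. 0 \<le> w X" and "\<eta> > 0"
  obtains k where "(\<Sum>X\<in>S. w X * q' X) - \<eta> \<le> (\<Sum>X\<in>S. w X * frame_reward S tau r \<rho> X (Suc k))"
proof -
  define W where "W = (\<Sum>X\<in>S. w X)"
  define \<delta> where "\<delta> = \<eta> / (W + 1)"
  define target where "target = (\<Sum>X\<in>S. w X * q' X) - \<delta> * W"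
  have "0 \<le> W"
    unfolding W_def using w by (simp add: sum_nonneg)
  then have "\<delta> > 0" "\<delta> * W < \<eta>"
    using \<open>\<eta> > 0\<close> by (simp_all add: \<delta>_def field_simps)
  then obtain K where "K > 0" and K: "\<And>X. X \<in> S \<Longrightarrow> real K * (q' X - \<delta>) \<le> total_reward tau r \<rho> X (K * T)"
    using fulfills_total_reward_ge[OF fulfills] by metis
  have "real K * target = (\<Sum>X\<in>S. w X * (real K * (q' X - \<delta>)))"
    unfolding target_def W_def by (simp add: algebra_simps sum_subtractf sum_distrib_left)
  also have "\<dots> \<le> (\<Sum>X\<in>S. w X * total_reward tau r \<rho> X (K * T))"
    using K w by (intro sum_mono mult_left_mono) auto
  also have "\<dots> = (\<Sum>k<K. \<Sum>X\<in>S. w X * frame_reward S tau r \<rho> X (Suc k))"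
    by (simp add: total_reward_frames sum_distrib_left) (rule sum.swap)
  finally have average: "real K * target \<le> (\<Sum>k<K. \<Sum>X\<in>S. w X * frame_reward S tau r \<rho> X (Suc k))" .
  have "\<exists>k<K. target \<le> (\<Sum>X\<in>S. w X * frame_reward S tau r \<rho> X (Suc k))"
  proof (rule ccontr)
    assume "\<not> ?thesis"
    then have "(\<Sum>k<K. \<Sum>X\<in>S. w X * frame_reward S tau r \<rho> X (Suc k)) < real K * target"
      using \<open>K > 0\<close> by (intro sum_bounded_above_strict[of "{..<K}", simplified]) (auto simp: not_le)
    then show False
      using average by linarith
  qed
  then obtain k where "target \<le> (\<Sum>X\<in>S. w X * frame_reward S tau r \<rho> X (Suc k))"
    by blast
  then have "(\<Sum>X\<in>S. w X * q' X) - \<eta> \<le> (\<Sum>X\<in>S. w X * frame_reward S tau r \<rho> X (Suc k))"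
    using \<open>\<delta> * W < \<eta>\<close> unfolding target_def by linarith
  then show thesis
    by (rule that)
qed

lemma greedy_weighted_drift:
  assumes w: "\<forall>X\<in>S. 0 \<le> w X" and greedy: "\<forall>t\<in>frame m. greedy_slot w \<sigma> t"
    and valid: "valid_schedule S \<rho>" and fulfills: "fulfills S tau r (\<lambda>X. (1 + \<epsilon>) * (2 * q X)) \<rho>"
  shows "(1 + \<epsilon>) * (\<Sum>X\<in>S. w X * q X) \<le> (\<Sum>X\<in>S. w X * frame_reward S tau r \<sigma> X (Suc m))"
proof (rule field_le_epsilon)
  fix \<eta> :: real assume "\<eta> > 0"
  then have "2 * \<eta> > 0" by simp
  with fulfills w obtain k where
    "(\<Sum>X\<in>S. w X * ((1 + \<epsilon>) * (2 * q X))) - 2 * \<eta> \<le> (\<Sum>X\<in>S. w X * frame_reward S tau r \<rho> X (Suc k))"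
    by (rule exists_frame_near_requirement)
  also have "\<dots> \<le> 2 * (\<Sum>X\<in>S. w X * frame_reward S tau r \<sigma> X (Suc m))"
    using w greedy valid by (rule weighted_frame_reward_le_greedy)
  moreover have "(\<Sum>X\<in>S. w X * ((1 + \<epsilon>) * (2 * q X))) = 2 * ((1 + \<epsilon>) * (\<Sum>X\<in>S. w X * q X))"
    by (simp add: sum_distrib_left algebra_simps)
  ultimately show "(1 + \<epsilon>) * (\<Sum>X\<in>S. w X * q X) \<le> (\<Sum>X\<in>S. w X * frame_reward S tau r \<sigma> X (Suc m)) + \<eta>"
    by linarith
qed

lemma total_reward_mono: "X \<in> S \<Longrightarrow> t' \<le> t \<Longrightarrow> total_reward tau r \<sigma> X t' \<le> total_reward tau r \<sigma> X t"
  unfolding total_reward_def using slot_reward_nonneg by (intro sum_mono2) auto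

lemma debt_nonneg: "0 \<le> debt S tau r q \<sigma> X k"
  by (cases k) auto

lemma debt_ge_deficit: "real K * q X - total_reward tau r \<sigma> X (K * T) \<le> debt S tau r q \<sigma> X K"
proof (induction K)
  case (Suc K)
  have "total_reward tau r \<sigma> X (Suc K * T) = total_reward tau r \<sigma> X (K * T) + frame_reward S tau r \<sigma> X (Suc K)"
    unfolding total_reward_frames by simp
  moreover have "debt S tau r q \<sigma> X K + q X - frame_reward S tau r \<sigma> X (Suc K) \<le> debt S tau r q \<sigma> X (Suc K)"
    by simp
  moreover have "real (Suc K) * q X = real K * q X + q X"
    by (simp add: algebra_simps)
  ultimately show ?case
    using Suc.IH by linarith
qed (simp add: total_reward_def)

lemma debt_increment_bounded:
  "X \<in> S \<Longrightarrow> 0 \<le> q X \<Longrightarrow> \<bar>q X - frame_reward S tau r \<sigma> X (Suc k)\<bar> \<le> q X + real T * r X 1"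
  using frame_reward_nonneg[of X \<sigma> "Suc k"] frame_reward_le[of X \<sigma> k] by (simp add: abs_le_iff)

lemma greedy_maximizer_greedy_slot:
  assumes "greedy_maximizer_schedule S tau r q \<sigma>" and "t \<in> frame m"
  shows "greedy_slot (\<lambda>X. debt S tau r q \<sigma> X m) \<sigma> t"
proof -
  have "t div T = m"
    using assms(2) by (intro div_nat_eqI) (auto simp: mult.commute)
  then show ?thesis
    using assms(1) unfolding greedy_maximizer_schedule_def greedy_slot_def by metis
qed

lemma fulfills_of_bounded_debt:
  assumes bounded: "\<And>k X. X \<in> S \<Longrightarrow> debt S tau r q \<sigma> X k \<le> D" and q: "\<forall>X\<in>S. 0 \<le> q X"
  shows "fulfills S tau r q \<sigma>"
  unfolding fulfills_def avg_reward_def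
proof
  fix X assume X: "X \<in> S"
  have "q X * (real t / real T) - (D + q X) \<le> total_reward tau r \<sigma> X t" for t
  proof -
    define K where "K = t div T"
    have "real K * q X - D \<le> total_reward tau r \<sigma> X (K * T)"
      using debt_ge_deficit[of K q X \<sigma>] bounded[OF X, of K] by linarith
    also have "\<dots> \<le> total_reward tau r \<sigma> X t"
      using X unfolding K_def by (intro total_reward_mono) auto
    finally have "real K * q X - D \<le> total_reward tau r \<sigma> X t" .
    moreover have "real t / real T \<le> real K + 1"
    proof -
      have "t < T + K * T"
        unfolding K_def using frame_len_pos by (rule dividend_less_div_times)
      then have "real t < real T + real K * real T"
        by (simp flip: of_nat_mult of_nat_add)
      then show ?thesis
        using frame_len_pos by (simp add: field_simps)
    qed
    then have "q X * (real t / real T) \<le> q X * (real K + 1)"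
      using q X by (intro mult_left_mono) auto
    ultimately show ?thesis
      by (simp add: algebra_simps)
  qed
  then show "ereal (q X) \<le> liminf (\<lambda>t. ereal (total_reward tau r \<sigma> X t / (real t / real T)))"
    by (rule liminf_ratio_ge[OF frame_len_pos])
qed

end

theorem theorem9:
  fixes S :: "'a set" and tau :: "'a \<Rightarrow> nat" and r :: "'a \<Rightarrow> nat \<Rightarrow> real"
    and q :: "'a \<Rightarrow> real" and \<sigma> :: "nat \<Rightarrow> 'a option"
  assumes "finite S"
    and "\<forall>X\<in>S. tau X > 0"
    and "\<forall>X\<in>S. \<forall>i. 1 \<le> i \<and> i < tau X \<longrightarrow> r X (i + 1) \<le> r X i"
    and "\<forall>X\<in>S. \<forall>i. 1 \<le> i \<and> i \<le> tau X \<longrightarrow> 0 \<le> r X i"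
    and "\<forall>X\<in>S. q X > 0"
    and "strictly_feasible S tau r (\<lambda>X. 2 * q X)"
    and "greedy_maximizer_schedule S tau r q \<sigma>"
  shows "fulfills S tau r q \<sigma>"
proof -
  interpret task_system S tau r
    using assms(1-4) by unfold_locales
  let ?d = "\<lambda>k X. debt S tau r q \<sigma> X k"
  obtain \<epsilon> \<rho> where "\<epsilon> > 0" "valid_schedule S \<rho>" "fulfills S tau r (\<lambda>X. (1 + \<epsilon>) * (2 * q X)) \<rho>"
    using assms(6) unfolding strictly_feasible_def feasible_def by blast
  then have "(1 + \<epsilon>) * (\<Sum>X\<in>S. ?d k X * q X) \<le> (\<Sum>X\<in>S. ?d k X * frame_reward S tau r \<sigma> X (Suc k))" for k
    using debt_nonneg greedy_maximizer_greedy_slot[OF assms(7)] by (intro greedy_weighted_drift) auto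
  moreover have "\<bar>q X - frame_reward S tau r \<sigma> X (Suc k)\<bar> \<le> q X + real T * r X 1" if "X \<in> S" for k X
    using debt_increment_bounded assms(5) that by (simp add: less_imp_le)
  ultimately have "\<exists>D. \<forall>k. \<forall>X\<in>S. ?d k X \<le> D"
    using \<open>\<epsilon> > 0\<close> assms(1,5)
    by (intro negative_drift_bounded[where a = "\<lambda>k X. frame_reward S tau r \<sigma> X (Suc k)"]) auto
  then obtain D where "\<And>k X. X \<in> S \<Longrightarrow> ?d k X \<le> D"
    by blast
  then show ?thesis
    using assms(5) by (intro fulfills_of_bounded_debt) (auto simp: less_imp_le)
qed

end
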